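(* Let $f:\{0,1\}^n\to\{0,1\}$, let $\mathcal D$ be a distribution on $\{0,1\}^n$, and let $a\in\mathbb C^{2^n}$ be a unit vector with $\mathcal D(x)=|a_x|^2$ for all $x$. Let $\Gamma\in\mathbb R^{2^n\times 2^n}$ be a nonzero adversary matrix for $f$ having $a$ as a principal eigenvector. Consider a memoryless quantum query algorithm accessing $x\sim\mathcal D$, with joint state after $t$ queries $|\psi^t\rangle=\sum_{x}a_x|\psi_x^t\rangle\otimes|x\rangle$, and define $\Delta_t=\|\Gamma\|-|\langle\psi^t|(I\otimes\Gamma)|\psi^t\rangle|$. Then: (i) $\Delta_0=0$; (ii) $\Delta_{t+1}\le\Delta_t+2\max_{i\in\{1,\dots,n\}}\|\Gamma_i\|$ for each $t$; (iii) the average success probability after $T$ queries satisfies $p_{\mathrm{succ}}^{\mathcal D}\le\frac12+\sqrt{\Delta_T/(2\|\Gamma\|)}$. Consequently, $Q_{\mathcal D}(f)\ge\frac{\|\Gamma\|}{36\max_{i}\|\Gamma_i\|}$.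
   Context: Query model: the algorithm space has basis $|i,b\rangle$, $i\in\{1,\dots,n\}$, $b\in\{0,1\}$; $O_x|i,b\rangle=|i,b\oplus x_i\rangle$; a memoryless $T$-query algorithm is a sequence of unitaries $U_0,\dots,U_T$, with $|\psi_x^t\rangle=U_tO_x\cdots U_1O_xU_0|\mathrm{init}\rangle$ for a fixed basis state $|\mathrm{init}\rangle$; its output is the measured value register of the final state. The average success probability is $p_{\mathrm{succ}}^{\mathcal D}=\sum_x\mathcal D(x)\|(I\otimes|f(x)\rangle\langle f(x)|)|\psi_x^T\rangle\|^2$, and $Q_{\mathcal D}(f)$ is the smallest $T$ such that some $T$-query algorithm has $p_{\mathrm{succ}}^{\mathcal D}\ge 2/3$. An adversary matrix for $f$ is a real symmetric $\Gamma\in\mathbb R^{2^n\times2^n}$ (rows/columns indexed by $\{0,1\}^n$) with $\Gamma_{x,y}=0$ whenever $f(x)=f(y)$. For $i\in\{1,\dots,n\}$, $\Gamma_i$ is the matrix with $(\Gamma_i)_{x,y}=\Gamma_{x,y}$ if $x_i\ne y_i$ and $0$ otherwise. $\|\cdot\|$ on matrices is the spectral norm; a principal eigenvector is a unit eigenvector whose eigenvalue has absolute value $\|\Gamma\|$. *)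

theory Defs
  imports Complex_Main "HOL-Library.Extended_Nat"
begin

text \<open>Inputs x in {0,1}^n are bool lists of length n; bit i (0-based) is x ! i.\<close>
definition inputs :: "nat \<Rightarrow> bool list set" where
  "inputs n = {xs. length xs = n}"

text \<open>Index set of the algorithm space: basis states |i,b> with i < n (0-based).\<close>
definition alg_idx :: "nat \<Rightarrow> (nat \<times> bool) set" where
  "alg_idx n = {0..<n} \<times> (UNIV :: bool set)"

type_synonym avec = "nat \<times> bool \<Rightarrow> complex"
type_synonym amat = "nat \<times> bool \<Rightarrow> nat \<times> bool \<Rightarrow> complex"

definition mat_app :: "nat \<Rightarrow> amat \<Rightarrow> avec \<Rightarrow> avec" where
  "mat_app n M v = (\<lambda>p. \<Sum>q\<in>alg_idx n. M p q * v q)"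

definition unitary_on :: "nat \<Rightarrow> amat \<Rightarrow> bool" where
  "unitary_on n M \<longleftrightarrow>
     (\<forall>p\<in>alg_idx n. \<forall>q\<in>alg_idx n.
        (\<Sum>r\<in>alg_idx n. cnj (M r p) * M r q) = (if p = q then 1 else 0))"

definition query_oracle :: "bool list \<Rightarrow> avec \<Rightarrow> avec" where
  "query_oracle x v = (\<lambda>(i, b). v (i, b \<noteq> x ! i))"

definition ket :: "nat \<times> bool \<Rightarrow> avec" where
  "ket p0 = (\<lambda>p. if p = p0 then 1 else 0)"

primrec alg_state :: "nat \<Rightarrow> (nat \<Rightarrow> amat) \<Rightarrow> nat \<times> bool \<Rightarrow> bool list \<Rightarrow> nat \<Rightarrow> avec" where
  "alg_state n U init x 0 = mat_app n (U 0) (ket init)"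
| "alg_state n U init x (Suc t) = mat_app n (U (Suc t)) (query_oracle x (alg_state n U init x t))"

text \<open>Memoryless T-query algorithm: unitaries U_0..U_T, fixed basis state init.\<close>
definition valid_alg :: "nat \<Rightarrow> nat \<Rightarrow> (nat \<Rightarrow> amat) \<Rightarrow> nat \<times> bool \<Rightarrow> bool" where
  "valid_alg n T U init \<longleftrightarrow> init \<in> alg_idx n \<and> (\<forall>t\<le>T. unitary_on n (U t))"

text \<open>Average success probability: output = measured value register b.\<close>
definition p_succ :: "nat \<Rightarrow> (bool list \<Rightarrow> bool) \<Rightarrow> (bool list \<Rightarrow> real) \<Rightarrow> nat
    \<Rightarrow> (nat \<Rightarrow> amat) \<Rightarrow> nat \<times> bool \<Rightarrow> real" where
  "p_succ n f D T U init =
     (\<Sum>x\<in>inputs n. D x * (\<Sum>i<n. (cmod (alg_state n U init x T (i, f x)))\<^sup>2))"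

text \<open>Q_D(f): least T such that some T-query algorithm has success >= 2/3
  (infinity if there is none).\<close>
definition query_complexity :: "nat \<Rightarrow> (bool list \<Rightarrow> bool) \<Rightarrow> (bool list \<Rightarrow> real) \<Rightarrow> enat" where
  "query_complexity n f D =
     Inf {enat T | T. \<exists>U init. valid_alg n T U init \<and> p_succ n f D T U init \<ge> 2/3}"

definition spec_norm :: "'a set \<Rightarrow> ('a \<Rightarrow> 'a \<Rightarrow> real) \<Rightarrow> real" where
  "spec_norm S M = Sup {sqrt (\<Sum>x\<in>S. (cmod (\<Sum>y\<in>S. of_real (M x y) * v y))\<^sup>2) | v.
                         (\<Sum>y\<in>S. (cmod (v y))\<^sup>2) = 1}"

definition adversary_matrix :: "nat \<Rightarrow> (bool list \<Rightarrow> bool) \<Rightarrow> (bool list \<Rightarrow> bool list \<Rightarrow> real) \<Rightarrow> bool" where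
  "adversary_matrix n f \<Gamma> \<longleftrightarrow>
     (\<forall>x\<in>inputs n. \<forall>y\<in>inputs n. \<Gamma> x y = \<Gamma> y x \<and> (f x = f y \<longrightarrow> \<Gamma> x y = 0))"

text \<open>Gamma_i (0-based i).\<close>
definition adv_part :: "(bool list \<Rightarrow> bool list \<Rightarrow> real) \<Rightarrow> nat \<Rightarrow> bool list \<Rightarrow> bool list \<Rightarrow> real" where
  "adv_part \<Gamma> i = (\<lambda>x y. if x ! i \<noteq> y ! i then \<Gamma> x y else 0)"

definition principal_eigvec :: "nat \<Rightarrow> (bool list \<Rightarrow> bool list \<Rightarrow> real) \<Rightarrow> (bool list \<Rightarrow> complex) \<Rightarrow> bool" where
  "principal_eigvec n \<Gamma> a \<longleftrightarrow>
     (\<Sum>x\<in>inputs n. (cmod (a x))\<^sup>2) = 1 \<and>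
     (\<exists>ev::complex. cmod ev = spec_norm (inputs n) \<Gamma> \<and>
        (\<forall>x\<in>inputs n. (\<Sum>y\<in>inputs n. of_real (\<Gamma> x y) * a y) = ev * a x))"

definition joint_state :: "nat \<Rightarrow> (nat \<Rightarrow> amat) \<Rightarrow> nat \<times> bool \<Rightarrow> (bool list \<Rightarrow> complex) \<Rightarrow> nat
    \<Rightarrow> (nat \<times> bool) \<times> bool list \<Rightarrow> complex" where
  "joint_state n U init a t = (\<lambda>(p, x). a x * alg_state n U init x t p)"

definition id_tensor :: "nat \<Rightarrow> (bool list \<Rightarrow> bool list \<Rightarrow> real)
    \<Rightarrow> ((nat \<times> bool) \<times> bool list \<Rightarrow> complex) \<Rightarrow> (nat \<times> bool) \<times> bool list \<Rightarrow> complex" where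
  "id_tensor n \<Gamma> \<phi> = (\<lambda>(p, x). \<Sum>y\<in>inputs n. of_real (\<Gamma> x y) * \<phi> (p, y))"

definition joint_inner :: "nat \<Rightarrow> ((nat \<times> bool) \<times> bool list \<Rightarrow> complex)
    \<Rightarrow> ((nat \<times> bool) \<times> bool list \<Rightarrow> complex) \<Rightarrow> complex" where
  "joint_inner n \<phi> \<chi> = (\<Sum>z\<in>alg_idx n \<times> inputs n. cnj (\<phi> z) * \<chi> z)"

definition Delta :: "nat \<Rightarrow> (bool list \<Rightarrow> bool list \<Rightarrow> real) \<Rightarrow> (nat \<Rightarrow> amat) \<Rightarrow> nat \<times> bool
    \<Rightarrow> (bool list \<Rightarrow> complex) \<Rightarrow> nat \<Rightarrow> real" where
  "Delta n \<Gamma> U init a t =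
     spec_norm (inputs n) \<Gamma>
     - cmod (joint_inner n (joint_state n U init a t) (id_tensor n \<Gamma> (joint_state n U init a t)))"

end

(*
  The progress measure G_t = <psi^t|(I (x) Gamma)|psi^t> equals
  sum_{x,y} conj(a_x) Gamma_xy a_y <psi_x^t|psi_y^t>, so it depends only on the Gram matrix of the
  states psi_x^t and is unchanged by the unitaries U_t. Initially all psi_x coincide, so G_0 is the
  eigenvalue of a, of modulus ||Gamma||. A query to bit i flips the value register, which changes
  the Gram entry only for pairs x, y differing in bit i; hence G changes by
  -sum_i <d_i|(I (x) Gamma_i)|d_i>, where d_i is the difference of the two value branches on
  register i, and |G_{t+1} - G_t| <= 2 max_i ||Gamma_i||.
  Since Gamma vanishes between inputs with equal f-value and a is a principal eigenvector, the parts
  of a on f^-1(0) and f^-1(1) both have weight 1/2, and |G_T| is at most 2 ||Gamma|| times the overlap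
  of the final state's parts on these two fibres. High success probability forces these parts to
  put their weight on different answers, hence small overlap, large Delta_T, and many queries.
*)
theory Submission
  imports Defs "HOL-Analysis.L2_Norm"
begin

definition sq_norm :: "'a set \<Rightarrow> ('a \<Rightarrow> complex) \<Rightarrow> real" where
  "sq_norm X v = (\<Sum>x\<in>X. (cmod (v x))\<^sup>2)"

definition inner_on :: "'a set \<Rightarrow> ('a \<Rightarrow> complex) \<Rightarrow> ('a \<Rightarrow> complex) \<Rightarrow> complex" where
  "inner_on X u v = (\<Sum>x\<in>X. cnj (u x) * v x)"

definition mat_vec :: "'a set \<Rightarrow> ('a \<Rightarrow> 'a \<Rightarrow> real) \<Rightarrow> ('a \<Rightarrow> complex) \<Rightarrow> 'a \<Rightarrow> complex" where
  "mat_vec X M v = (\<lambda>x. \<Sum>y\<in>X. of_real (M x y) * v y)"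

definition sesq_form :: "'a set \<Rightarrow> ('a \<Rightarrow> 'a \<Rightarrow> real) \<Rightarrow> ('a \<Rightarrow> complex) \<Rightarrow> ('a \<Rightarrow> complex) \<Rightarrow> complex" where
  "sesq_form X M u v = (\<Sum>x\<in>X. \<Sum>y\<in>X. cnj (u x) * of_real (M x y) * v y)"

lemma sq_norm_nonneg: "0 \<le> sq_norm X v"
  unfolding sq_norm_def by (simp add: sum_nonneg)

lemma sqrt_sq_norm_eq_L2_set: "sqrt (sq_norm X v) = L2_set (\<lambda>x. cmod (v x)) X"
  by (simp add: sq_norm_def L2_set_def)

lemma inner_on_self: "inner_on X v v = of_real (sq_norm X v)"
  unfolding inner_on_def sq_norm_def of_real_sum
  by (rule sum.cong[OF refl]) (metis complex_norm_square mult.commute)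

lemma inner_on_Cauchy_Schwarz: "cmod (inner_on X u v) \<le> sqrt (sq_norm X u) * sqrt (sq_norm X v)"
proof -
  have "cmod (inner_on X u v) \<le> (\<Sum>x\<in>X. \<bar>cmod (u x)\<bar> * \<bar>cmod (v x)\<bar>)"
    unfolding inner_on_def by (rule order_trans[OF norm_sum]) (simp add: norm_mult)
  also have "\<dots> \<le> sqrt (sq_norm X u) * sqrt (sq_norm X v)"
    unfolding sqrt_sq_norm_eq_L2_set by (rule L2_set_mult_ineq)
  finally show ?thesis .
qed

lemma sq_norm_diff_le: "sq_norm X (\<lambda>x. u x - v x) \<le> 2 * (sq_norm X u + sq_norm X v)"
proof -
  have "(cmod (u x - v x))\<^sup>2 \<le> 2 * ((cmod (u x))\<^sup>2 + (cmod (v x))\<^sup>2)" for x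
  proof -
    have "0 \<le> (cmod (u x) - cmod (v x))\<^sup>2" by simp
    then have "(cmod (u x) + cmod (v x))\<^sup>2 \<le> 2 * ((cmod (u x))\<^sup>2 + (cmod (v x))\<^sup>2)"
      by (simp add: power2_eq_square algebra_simps)
    moreover have "(cmod (u x - v x))\<^sup>2 \<le> (cmod (u x) + cmod (v x))\<^sup>2"
      by (intro power_mono norm_triangle_ineq4) simp
    ultimately show ?thesis by linarith
  qed
  then show ?thesis
    unfolding sq_norm_def sum_distrib_left sum.distrib[symmetric] by (intro sum_mono) simp
qed

lemma sesq_form_eq_inner_on: "sesq_form X M u v = inner_on X u (mat_vec X M v)"
  by (simp add: sesq_form_def inner_on_def mat_vec_def sum_distrib_left mult.assoc)

lemma sesq_form_conj_sym:
  assumes "\<And>x y. x \<in> X \<Longrightarrow> y \<in> X \<Longrightarrow> M x y = M y x"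
  shows "sesq_form X M v u = cnj (sesq_form X M u v)"
proof -
  have "cnj (sesq_form X M u v) = (\<Sum>x\<in>X. \<Sum>y\<in>X. cnj (v y) * of_real (M y x) * u x)"
    unfolding sesq_form_def cnj_sum using assms by (intro sum.cong refl) (simp add: mult_ac)
  also have "\<dots> = sesq_form X M v u"
    unfolding sesq_form_def by (rule sum.swap[symmetric])
  finally show ?thesis by simp
qed

lemma norm_mat_vec_le_spec_norm_of_unit:
  assumes "finite X" "sq_norm X v = 1"
  shows "sqrt (sq_norm X (mat_vec X M v)) \<le> spec_norm X M"
  unfolding spec_norm_def
proof (rule cSup_upper)
  show "sqrt (sq_norm X (mat_vec X M v)) \<in> {sqrt (\<Sum>x\<in>X. (cmod (\<Sum>y\<in>X. of_real (M x y) * v y))\<^sup>2) | v.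
          (\<Sum>y\<in>X. (cmod (v y))\<^sup>2) = 1}"
    using assms(2) unfolding sq_norm_def mat_vec_def by blast
  have "sqrt (\<Sum>x\<in>X. (cmod (\<Sum>y\<in>X. of_real (M x y) * w y))\<^sup>2) \<le> sqrt (\<Sum>x\<in>X. (\<Sum>y\<in>X. \<bar>M x y\<bar>)\<^sup>2)"
    if w: "(\<Sum>y\<in>X. (cmod (w y))\<^sup>2) = 1" for w
  proof -
    have "cmod (w y) \<le> 1" if "y \<in> X" for y
    proof -
      have "(cmod (w y))\<^sup>2 \<le> 1"
        using member_le_sum[of y X "\<lambda>y. (cmod (w y))\<^sup>2"] assms(1) that w by simp
      then show ?thesis by (simp add: power_le_one_iff abs_square_le_1)
    qed
    then have "cmod (\<Sum>y\<in>X. of_real (M x y) * w y) \<le> (\<Sum>y\<in>X. \<bar>M x y\<bar>)" for x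
      by (intro order_trans[OF norm_sum] sum_mono)
        (simp add: norm_mult mult_left_le)
    then show ?thesis
      by (intro real_sqrt_le_mono sum_mono power_mono) auto
  qed
  then show "bdd_above {sqrt (\<Sum>x\<in>X. (cmod (\<Sum>y\<in>X. of_real (M x y) * v y))\<^sup>2) | v.
          (\<Sum>y\<in>X. (cmod (v y))\<^sup>2) = 1}"
    unfolding bdd_above_def by blast
qed

lemma sq_norm_indicator:
  assumes "finite X" "y \<in> X"
  shows "sq_norm X (\<lambda>x. if x = y then 1 else 0) = 1"
  using assms by (simp add: sq_norm_def if_distrib[of "\<lambda>z. (cmod z)\<^sup>2"] cong: if_cong)

lemma spec_norm_nonneg:
  assumes "finite X" "y \<in> X"
  shows "0 \<le> spec_norm X M"
  using norm_mat_vec_le_spec_norm_of_unit[OF assms(1) sq_norm_indicator[OF assms]]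
  by (meson order_trans real_sqrt_ge_zero sq_norm_nonneg)

lemma spec_norm_pos:
  assumes "finite X" "x \<in> X" "y \<in> X" "M x y \<noteq> 0"
  shows "0 < spec_norm X M"
proof -
  let ?e = "\<lambda>z. if z = y then 1 else 0 :: complex"
  have "0 < (cmod (mat_vec X M ?e x))\<^sup>2"
    using assms by (simp add: mat_vec_def if_distrib[of "\<lambda>z. _ * z"] cong: if_cong)
  also have "\<dots> \<le> sq_norm X (mat_vec X M ?e)"
    unfolding sq_norm_def using assms by (intro member_le_sum) auto
  finally have "0 < sqrt (sq_norm X (mat_vec X M ?e))" by simp
  also have "\<dots> \<le> spec_norm X M"
    by (rule norm_mat_vec_le_spec_norm_of_unit[OF assms(1) sq_norm_indicator[OF assms(1,3)]])
  finally show ?thesis .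
qed

lemma norm_mat_vec_le:
  assumes "finite X"
  shows "sqrt (sq_norm X (mat_vec X M v)) \<le> spec_norm X M * sqrt (sq_norm X v)"
proof (cases "sq_norm X v = 0")
  case True
  then have "\<forall>y\<in>X. v y = 0"
    using assms by (simp add: sq_norm_def sum_nonneg_eq_0_iff)
  then show ?thesis using True by (simp add: sq_norm_def mat_vec_def)
next
  case False
  define c where "c = sqrt (sq_norm X v)"
  have c: "0 < c" using False sq_norm_nonneg[of X v] by (simp add: c_def)
  have "sq_norm X (\<lambda>y. v y / of_real c) = sq_norm X v / c\<^sup>2"
    by (simp add: sq_norm_def norm_divide power_divide sum_divide_distrib)
  then have unit: "sq_norm X (\<lambda>y. v y / of_real c) = 1"
    using c sq_norm_nonneg[of X v] by (simp add: c_def)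
  have "mat_vec X M (\<lambda>y. v y / of_real c) = (\<lambda>x. mat_vec X M v x / of_real c)"
    by (simp add: mat_vec_def sum_divide_distrib)
  then have "sqrt (sq_norm X (mat_vec X M (\<lambda>y. v y / of_real c)))
      = sqrt (sq_norm X (mat_vec X M v)) / c"
    using c by (simp add: sq_norm_def norm_divide power_divide sum_divide_distrib[symmetric] real_sqrt_divide)
  with norm_mat_vec_le_spec_norm_of_unit[OF assms unit, of M] c show ?thesis
    by (simp add: c_def divide_le_eq mult.commute)
qed

lemma sesq_form_le:
  assumes "finite X"
  shows "cmod (sesq_form X M u v) \<le> spec_norm X M * sqrt (sq_norm X u) * sqrt (sq_norm X v)"
proof -
  have "cmod (sesq_form X M u v) \<le> sqrt (sq_norm X u) * sqrt (sq_norm X (mat_vec X M v))"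
    unfolding sesq_form_eq_inner_on by (rule inner_on_Cauchy_Schwarz)
  also have "\<dots> \<le> sqrt (sq_norm X u) * (spec_norm X M * sqrt (sq_norm X v))"
    by (intro mult_left_mono norm_mat_vec_le[OF assms]) (simp add: sq_norm_nonneg)
  finally show ?thesis by (simp add: mult_ac)
qed

lemma sesq_form_self_le:
  assumes "finite X"
  shows "cmod (sesq_form X M v v) \<le> spec_norm X M * sq_norm X v"
  using sesq_form_le[OF assms, of M v v] by (simp add: mult.assoc sq_norm_nonneg)

lemma finite_inputs: "finite (inputs n)"
  using finite_lists_length_eq[of "UNIV :: bool set" n] by (simp add: inputs_def)

lemma replicate_in_inputs: "replicate n b \<in> inputs n"
  by (simp add: inputs_def)

lemma finite_alg_idx: "finite (alg_idx n)"
  by (simp add: alg_idx_def)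

lemma sum_alg_idx: "sum g (alg_idx n) = (\<Sum>i<n. g (i, False) + g (i, True))"
proof -
  have "sum g (alg_idx n) = (\<Sum>i<n. \<Sum>b\<in>UNIV. g (i, b))"
    by (simp add: alg_idx_def sum.cartesian_product atLeast0LessThan)
  then show ?thesis by (simp add: UNIV_bool add.commute)
qed

lemma inner_on_mat_app:
  assumes "unitary_on n M"
  shows "inner_on (alg_idx n) (mat_app n M v) (mat_app n M w) = inner_on (alg_idx n) v w"
proof -
  let ?S = "alg_idx n"
  have "inner_on ?S (mat_app n M v) (mat_app n M w)
      = (\<Sum>p\<in>?S. \<Sum>q\<in>?S. \<Sum>r\<in>?S. cnj (v q) * w r * (cnj (M p q) * M p r))"
    by (simp add: inner_on_def mat_app_def cnj_sum sum_distrib_left sum_distrib_right mult_ac)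
  also have "\<dots> = (\<Sum>q\<in>?S. \<Sum>r\<in>?S. \<Sum>p\<in>?S. cnj (v q) * w r * (cnj (M p q) * M p r))"
    by (subst sum.swap) (rule sum.cong[OF refl], rule sum.swap)
  also have "\<dots> = (\<Sum>q\<in>?S. \<Sum>r\<in>?S. cnj (v q) * w r * (if q = r then 1 else 0))"
    using assms unfolding unitary_on_def by (simp add: sum_distrib_left[symmetric])
  also have "\<dots> = inner_on ?S v w"
    by (simp add: inner_on_def if_distrib[of "\<lambda>z. _ * z"] finite_alg_idx cong: if_cong)
  finally show ?thesis .
qed

lemma query_flip_inner:
  fixes u v :: "'a \<times> bool \<Rightarrow> complex"
  shows "cnj (u (i, False \<noteq> c)) * v (i, False \<noteq> d) + cnj (u (i, True \<noteq> c)) * v (i, True \<noteq> d)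
       = cnj (u (i, False)) * v (i, False) + cnj (u (i, True)) * v (i, True)
         - (if c \<noteq> d then cnj (u (i, False) - u (i, True)) * (v (i, False) - v (i, True)) else 0)"
  by (cases c; cases d) (simp_all add: algebra_simps)

lemma inner_on_query_oracle:
  "inner_on (alg_idx n) (query_oracle x v) (query_oracle y w)
   = inner_on (alg_idx n) v w
     - (\<Sum>i<n. if x ! i \<noteq> y ! i
               then cnj (v (i, False) - v (i, True)) * (w (i, False) - w (i, True)) else 0)"
  unfolding inner_on_def sum_alg_idx query_oracle_def sum_subtractf[symmetric]
  by (intro sum.cong refl) (simp only: prod.case, rule query_flip_inner)

lemma sq_norm_alg_state:
  assumes "valid_alg n T U init" "t \<le> T"
  shows "sq_norm (alg_idx n) (alg_state n U init x t) = 1"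
proof -
  have "inner_on (alg_idx n) (alg_state n U init x t) (alg_state n U init x t) = 1"
    using assms(2)
  proof (induction t)
    case 0
    have "inner_on (alg_idx n) (ket init) (ket init) = 1"
      using assms(1) by (simp add: valid_alg_def inner_on_def ket_def finite_alg_idx
          if_distrib[of "\<lambda>z. _ * z"] cong: if_cong)
    then show ?case
      using assms(1) by (simp add: valid_alg_def inner_on_mat_app)
  next
    case (Suc t)
    then show ?case
      using assms(1) by (simp add: valid_alg_def inner_on_mat_app inner_on_query_oracle)
  qed
  then show ?thesis by (simp add: inner_on_self)
qed

definition progress :: "'p set \<Rightarrow> 'x set \<Rightarrow> ('x \<Rightarrow> 'x \<Rightarrow> real) \<Rightarrow> ('x \<Rightarrow> complex)
    \<Rightarrow> ('x \<Rightarrow> 'p \<Rightarrow> complex) \<Rightarrow> complex" where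
  "progress P X \<Gamma> a \<psi> = (\<Sum>p\<in>P. sesq_form X \<Gamma> (\<lambda>x. a x * \<psi> x p) (\<lambda>x. a x * \<psi> x p))"

lemma joint_inner_id_tensor_eq_progress:
  "joint_inner n (joint_state n U init a t) (id_tensor n \<Gamma> (joint_state n U init a t))
   = progress (alg_idx n) (inputs n) \<Gamma> a (\<lambda>x. alg_state n U init x t)"
proof -
  have "joint_inner n (joint_state n U init a t) (id_tensor n \<Gamma> (joint_state n U init a t))
      = (\<Sum>p\<in>alg_idx n. \<Sum>x\<in>inputs n.
           cnj (joint_state n U init a t (p, x)) * id_tensor n \<Gamma> (joint_state n U init a t) (p, x))"
    unfolding joint_inner_def by (simp add: sum.cartesian_product)
  then show ?thesis
    by (simp add: progress_def sesq_form_def joint_state_def id_tensor_def sum_distrib_left mult.assoc)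
qed

lemma progress_gram:
  "progress P X \<Gamma> a \<psi>
   = (\<Sum>x\<in>X. \<Sum>y\<in>X. cnj (a x) * of_real (\<Gamma> x y) * a y * inner_on P (\<psi> x) (\<psi> y))"
proof -
  have "progress P X \<Gamma> a \<psi>
      = (\<Sum>p\<in>P. \<Sum>x\<in>X. \<Sum>y\<in>X. cnj (a x) * of_real (\<Gamma> x y) * a y * (cnj (\<psi> x p) * \<psi> y p))"
    unfolding progress_def sesq_form_def by (simp add: mult_ac)
  also have "\<dots> = (\<Sum>x\<in>X. \<Sum>y\<in>X. \<Sum>p\<in>P. cnj (a x) * of_real (\<Gamma> x y) * a y * (cnj (\<psi> x p) * \<psi> y p))"
    by (subst sum.swap) (rule sum.cong[OF refl], rule sum.swap)
  finally show ?thesis by (simp add: inner_on_def sum_distrib_left)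
qed

lemma progress_cong_gram:
  assumes "\<And>x y. x \<in> X \<Longrightarrow> y \<in> X \<Longrightarrow> inner_on P (\<phi> x) (\<phi> y) = inner_on Q (\<psi> x) (\<psi> y)"
  shows "progress P X \<Gamma> a \<phi> = progress Q X \<Gamma> a \<psi>"
  unfolding progress_gram using assms by (intro sum.cong refl) simp

lemma progress_const: "progress P X \<Gamma> a (\<lambda>x. \<phi>) = inner_on P \<phi> \<phi> * sesq_form X \<Gamma> a a"
  by (simp add: progress_gram sesq_form_def sum_distrib_left mult_ac)

lemma sesq_form_eigvec:
  assumes "\<forall>x\<in>X. (\<Sum>y\<in>X. of_real (M x y) * a y) = ev * a x"
  shows "sesq_form X M u a = ev * inner_on X u a"
  using assms by (simp add: sesq_form_eq_inner_on inner_on_def mat_vec_def sum_distrib_left mult_ac)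

lemma progress_query_oracle:
  "progress (alg_idx n) X \<Gamma> a (\<lambda>x. query_oracle x (\<psi> x))
   = progress (alg_idx n) X \<Gamma> a \<psi>
     - (\<Sum>i<n. sesq_form X (adv_part \<Gamma> i) (\<lambda>x. a x * (\<psi> x (i, False) - \<psi> x (i, True)))
                                       (\<lambda>x. a x * (\<psi> x (i, False) - \<psi> x (i, True))))"
proof -
  let ?d = "\<lambda>x i. \<psi> x (i, False) - \<psi> x (i, True)"
  let ?c = "\<lambda>x y. cnj (a x) * of_real (\<Gamma> x y) * a y"
  have adv: "?c x y * (if x ! i \<noteq> y ! i then cnj (?d x i) * ?d y i else 0)
      = cnj (a x) * of_real (adv_part \<Gamma> i x y) * a y * (cnj (?d x i) * ?d y i)" for x y i
    by (simp add: adv_part_def)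
  have "progress (alg_idx n) X \<Gamma> a (\<lambda>x. query_oracle x (\<psi> x))
      = progress (alg_idx n) X \<Gamma> a \<psi>
        - (\<Sum>x\<in>X. \<Sum>y\<in>X. ?c x y * (\<Sum>i<n. if x ! i \<noteq> y ! i then cnj (?d x i) * ?d y i else 0))"
    unfolding progress_gram inner_on_query_oracle by (simp only: right_diff_distrib sum_subtractf)
  also have "(\<Sum>x\<in>X. \<Sum>y\<in>X. ?c x y * (\<Sum>i<n. if x ! i \<noteq> y ! i then cnj (?d x i) * ?d y i else 0))
      = (\<Sum>x\<in>X. \<Sum>y\<in>X. \<Sum>i<n. cnj (a x) * of_real (adv_part \<Gamma> i x y) * a y * (cnj (?d x i) * ?d y i))"
    by (simp only: sum_distrib_left adv)
  also have "\<dots> = (\<Sum>i<n. \<Sum>x\<in>X. \<Sum>y\<in>X. cnj (a x) * of_real (adv_part \<Gamma> i x y) * a y * (cnj (?d x i) * ?d y i))"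
    by (subst sum.swap) (rule sum.cong[OF refl], rule sum.swap)
  finally show ?thesis by (simp add: sesq_form_def mult_ac)
qed

lemma sum_sq_norm_weighted:
  "(\<Sum>p\<in>P. sq_norm X (\<lambda>x. a x * \<psi> x p)) = (\<Sum>x\<in>X. (cmod (a x))\<^sup>2 * sq_norm P (\<psi> x))"
  unfolding sq_norm_def
  by (simp add: norm_mult power_mult_distrib sum_distrib_left) (rule sum.swap)

lemma progress_query_oracle_change_le:
  assumes "finite X" "y \<in> X" and M: "\<And>i. i < n \<Longrightarrow> spec_norm X (adv_part \<Gamma> i) \<le> M"
  shows "cmod (progress (alg_idx n) X \<Gamma> a (\<lambda>x. query_oracle x (\<psi> x)) - progress (alg_idx n) X \<Gamma> a \<psi>)
         \<le> 2 * M * (\<Sum>x\<in>X. (cmod (a x))\<^sup>2 * sq_norm (alg_idx n) (\<psi> x))"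
proof -
  let ?u = "\<lambda>p x. a x * \<psi> x p"
  let ?d = "\<lambda>i x. ?u (i, False) x - ?u (i, True) x"
  have "cmod (progress (alg_idx n) X \<Gamma> a (\<lambda>x. query_oracle x (\<psi> x)) - progress (alg_idx n) X \<Gamma> a \<psi>)
      = cmod (\<Sum>i<n. sesq_form X (adv_part \<Gamma> i) (?d i) (?d i))"
    by (simp add: progress_query_oracle right_diff_distrib)
  also have "\<dots> \<le> (\<Sum>i<n. spec_norm X (adv_part \<Gamma> i) * sq_norm X (?d i))"
    by (intro order_trans[OF norm_sum] sum_mono sesq_form_self_le[OF assms(1)])
  also have "\<dots> \<le> (\<Sum>i<n. M * (2 * (sq_norm X (?u (i, False)) + sq_norm X (?u (i, True)))))"
  proof (intro sum_mono)
    fix i assume "i \<in> {..<n}"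
    then have "spec_norm X (adv_part \<Gamma> i) \<le> M" by (simp add: M)
    moreover have "0 \<le> spec_norm X (adv_part \<Gamma> i)" by (rule spec_norm_nonneg[OF assms(1,2)])
    ultimately show "spec_norm X (adv_part \<Gamma> i) * sq_norm X (?d i)
        \<le> M * (2 * (sq_norm X (?u (i, False)) + sq_norm X (?u (i, True))))"
      by (intro mult_mono sq_norm_diff_le) (auto simp: sq_norm_nonneg)
  qed
  also have "\<dots> = 2 * M * (\<Sum>p\<in>alg_idx n. sq_norm X (?u p))"
    by (simp add: sum_alg_idx sum_distrib_left algebra_simps)
  finally show ?thesis by (simp add: sum_sq_norm_weighted)
qed

lemma Delta_0:
  assumes "valid_alg n T U init" "principal_eigvec n \<Gamma> a"
  shows "Delta n \<Gamma> U init a 0 = 0"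
proof -
  obtain ev where ev: "cmod ev = spec_norm (inputs n) \<Gamma>"
    and eig: "\<forall>x\<in>inputs n. (\<Sum>y\<in>inputs n. of_real (\<Gamma> x y) * a y) = ev * a x"
    and unit: "sq_norm (inputs n) a = 1"
    using assms(2) by (auto simp: principal_eigvec_def sq_norm_def)
  let ?\<phi> = "mat_app n (U 0) (ket init)"
  have "sq_norm (alg_idx n) ?\<phi> = 1"
    using sq_norm_alg_state[OF assms(1), of 0] by simp
  then have "progress (alg_idx n) (inputs n) \<Gamma> a (\<lambda>x. alg_state n U init x 0) = ev"
    using unit by (simp add: progress_const sesq_form_eigvec[OF eig] inner_on_self)
  then show ?thesis
    by (simp add: Delta_def joint_inner_id_tensor_eq_progress ev)
qed

lemma Delta_Suc_le:
  assumes "valid_alg n T U init" "t < T" "sq_norm (inputs n) a = 1"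
  shows "Delta n \<Gamma> U init a (Suc t)
         \<le> Delta n \<Gamma> U init a t + 2 * Max ((\<lambda>i. spec_norm (inputs n) (adv_part \<Gamma> i)) ` {0..<n})"
proof -
  let ?M = "Max ((\<lambda>i. spec_norm (inputs n) (adv_part \<Gamma> i)) ` {0..<n})"
  let ?\<psi> = "\<lambda>t x. alg_state n U init x t"
  let ?G = "\<lambda>t. progress (alg_idx n) (inputs n) \<Gamma> a (?\<psi> t)"
  have "unitary_on n (U (Suc t))"
    using assms(1,2) by (simp add: valid_alg_def)
  then have "?G (Suc t) = progress (alg_idx n) (inputs n) \<Gamma> a (\<lambda>x. query_oracle x (?\<psi> t x))"
    by (intro progress_cong_gram) (simp add: inner_on_mat_app)
  then have "cmod (?G (Suc t) - ?G t) \<le> 2 * ?M * (\<Sum>x\<in>inputs n. (cmod (a x))\<^sup>2 * sq_norm (alg_idx n) (?\<psi> t x))"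
    by (simp add: progress_query_oracle_change_le[OF finite_inputs replicate_in_inputs])
  also have "\<dots> = 2 * ?M"
    using assms(3) sq_norm_alg_state[OF assms(1) less_imp_le[OF assms(2)]]
    by (simp add: sq_norm_def[of "inputs n"])
  finally have "cmod (?G t) - cmod (?G (Suc t)) \<le> 2 * ?M"
    using norm_triangle_ineq3[of "?G (Suc t)" "?G t"] by linarith
  then show ?thesis
    by (simp add: Delta_def joint_inner_id_tensor_eq_progress)
qed

lemma le_linear_of_bounded_increments:
  fixes d :: "nat \<Rightarrow> real"
  assumes "d 0 = 0" "\<And>t. t < T \<Longrightarrow> d (Suc t) \<le> d t + c" "t \<le> T"
  shows "d t \<le> c * t"
  using assms(3)
proof (induction t)
  case (Suc t)
  then show ?case using assms(2)[of t] by (simp add: algebra_simps)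
qed (simp add: assms(1))

definition fiber_part :: "('x \<Rightarrow> bool) \<Rightarrow> bool \<Rightarrow> ('x \<Rightarrow> complex) \<Rightarrow> 'x \<Rightarrow> complex" where
  "fiber_part f b v = (\<lambda>x. if f x = b then v x else 0)"

lemma fiber_part_fiber_part [simp]:
  "fiber_part f b (fiber_part f c v) = (if b = c then fiber_part f b v else (\<lambda>_. 0))"
  by (auto simp: fiber_part_def)

lemma fiber_part_mult: "fiber_part f b (\<lambda>x. a x * w x) = (\<lambda>x. fiber_part f b a x * w x)"
  by (auto simp: fiber_part_def)

lemma sesq_form_zero_left [simp]: "sesq_form X M (\<lambda>_. 0) v = 0"
  by (simp add: sesq_form_def)

lemma sq_norm_fiber_parts:
  "sq_norm X (fiber_part f False v) + sq_norm X (fiber_part f True v) = sq_norm X v"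
  unfolding sq_norm_def sum.distrib[symmetric] by (intro sum.cong refl) (simp add: fiber_part_def)

lemma inner_on_fiber_part: "inner_on X (fiber_part f b v) v = of_real (sq_norm X (fiber_part f b v))"
  unfolding inner_on_self[symmetric] inner_on_def by (intro sum.cong refl) (simp add: fiber_part_def)

lemma adversary_sesq_form_split:
  assumes "adversary_matrix n f \<Gamma>"
  shows "sesq_form (inputs n) \<Gamma> u v
       = sesq_form (inputs n) \<Gamma> (fiber_part f False u) (fiber_part f True v)
         + sesq_form (inputs n) \<Gamma> (fiber_part f True u) (fiber_part f False v)"
  using assms unfolding sesq_form_def sum.distrib[symmetric] adversary_matrix_def fiber_part_def
  by (intro sum.cong refl) auto

lemma principal_eigvec_fiber_half:
  assumes adv: "adversary_matrix n f \<Gamma>" and "principal_eigvec n \<Gamma> a"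
    and "spec_norm (inputs n) \<Gamma> \<noteq> 0"
  shows "sq_norm (inputs n) (fiber_part f b a) = 1/2"
proof -
  let ?X = "inputs n"
  obtain ev where ev: "cmod ev = spec_norm ?X \<Gamma>"
    and eig: "\<forall>x\<in>?X. (\<Sum>y\<in>?X. of_real (\<Gamma> x y) * a y) = ev * a x"
    and unit: "sq_norm ?X a = 1"
    using assms(2) by (auto simp: principal_eigvec_def sq_norm_def)
  have eq: "ev * of_real (sq_norm ?X (fiber_part f c a))
      = sesq_form ?X \<Gamma> (fiber_part f c a) (fiber_part f (\<not> c) a)" for c
  proof -
    have "ev * of_real (sq_norm ?X (fiber_part f c a)) = sesq_form ?X \<Gamma> (fiber_part f c a) a"
      by (simp add: sesq_form_eigvec[OF eig] inner_on_fiber_part)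
    also have "\<dots> = sesq_form ?X \<Gamma> (fiber_part f c a) (fiber_part f (\<not> c) a)"
      by (subst adversary_sesq_form_split[OF adv]) (cases c; simp)
    finally show ?thesis .
  qed
  have "sesq_form ?X \<Gamma> (fiber_part f True a) (fiber_part f False a)
      = cnj (sesq_form ?X \<Gamma> (fiber_part f False a) (fiber_part f True a))"
    using adv by (intro sesq_form_conj_sym) (simp add: adversary_matrix_def)
  then have "ev * of_real (sq_norm ?X (fiber_part f True a))
      = cnj (ev * of_real (sq_norm ?X (fiber_part f False a)))"
    by (simp only: eq not_True_eq_False not_False_eq_True)
  from arg_cong[OF this, of cmod]
  have "cmod ev * sq_norm ?X (fiber_part f True a) = cmod ev * sq_norm ?X (fiber_part f False a)"
    by (simp add: norm_mult sq_norm_nonneg)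
  then have "sq_norm ?X (fiber_part f False a) = sq_norm ?X (fiber_part f True a)"
    using assms(3) ev by simp
  with sq_norm_fiber_parts[of ?X f a] unit show ?thesis by (cases b) simp_all
qed

lemma progress_le_fiber_overlap:
  assumes "adversary_matrix n f \<Gamma>"
  shows "cmod (progress P (inputs n) \<Gamma> a \<psi>)
         \<le> 2 * spec_norm (inputs n) \<Gamma>
             * (\<Sum>p\<in>P. sqrt (sq_norm (inputs n) (\<lambda>x. fiber_part f False a x * \<psi> x p))
                      * sqrt (sq_norm (inputs n) (\<lambda>x. fiber_part f True a x * \<psi> x p)))"
proof -
  let ?s = "spec_norm (inputs n) \<Gamma>"
  let ?r = "\<lambda>b p. sqrt (sq_norm (inputs n) (\<lambda>x. fiber_part f b a x * \<psi> x p))"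
  have "cmod (sesq_form (inputs n) \<Gamma> (\<lambda>x. a x * \<psi> x p) (\<lambda>x. a x * \<psi> x p))
      \<le> ?s * ?r False p * ?r True p + ?s * ?r True p * ?r False p" for p
    by (subst adversary_sesq_form_split[OF assms], unfold fiber_part_mult)
      (intro order_trans[OF norm_triangle_ineq] add_mono sesq_form_le finite_inputs)
  then have "cmod (progress P (inputs n) \<Gamma> a \<psi>) \<le> (\<Sum>p\<in>P. 2 * ?s * (?r False p * ?r True p))"
    unfolding progress_def by (intro order_trans[OF norm_sum] sum_mono) (simp add: algebra_simps)
  then show ?thesis by (simp add: sum_distrib_left)
qed

lemma sum_sqrt_mult_le:
  assumes "\<And>i. 0 \<le> u i" "\<And>i. 0 \<le> v i"
  shows "(\<Sum>i\<in>I. sqrt (u i) * sqrt (v i)) \<le> sqrt (sum u I) * sqrt (sum v I)"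
  using L2_set_mult_ineq[where f = "\<lambda>i. sqrt (u i)" and g = "\<lambda>i. sqrt (v i)" and A = I] assms
  by (simp add: L2_set_def)

lemma p_succ_eq_fiber_masses:
  assumes "\<forall>x\<in>inputs n. D x = (cmod (a x))\<^sup>2"
  shows "p_succ n f D T U init
       = (\<Sum>i<n. sq_norm (inputs n) (\<lambda>x. fiber_part f False a x * alg_state n U init x T (i, False))
               + sq_norm (inputs n) (\<lambda>x. fiber_part f True a x * alg_state n U init x T (i, True)))"
    (is "_ = ?rhs")
proof -
  have "p_succ n f D T U init = (\<Sum>x\<in>inputs n. \<Sum>i<n. (cmod (a x))\<^sup>2 * (cmod (alg_state n U init x T (i, f x)))\<^sup>2)"
    using assms by (simp add: p_succ_def sum_distrib_left)
  also have "\<dots> = (\<Sum>i<n. \<Sum>x\<in>inputs n. (cmod (a x))\<^sup>2 * (cmod (alg_state n U init x T (i, f x)))\<^sup>2)"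
    by (rule sum.swap)
  also have "\<dots> = ?rhs"
    unfolding sq_norm_def sum.distrib[symmetric]
    by (intro sum.cong refl) (auto simp: fiber_part_def norm_mult power_mult_distrib)
  finally show ?thesis .
qed

text \<open>Applied with \<alpha>, \<gamma> (resp. \<beta>, \<delta>) the norms of the part of the final state on inputs
  with f x = False (resp. True) and answer bit False, True: then \<alpha>^2 + \<delta>^2 is the success
  probability and 2 \<parallel>\<Gamma>\<parallel> (\<alpha> \<beta> + \<gamma> \<delta>) bounds the final progress.\<close>

lemma fidelity_inequality:
  fixes \<alpha> \<beta> \<gamma> \<delta> :: real
  assumes "\<alpha>\<^sup>2 + \<gamma>\<^sup>2 = 1/2" "\<beta>\<^sup>2 + \<delta>\<^sup>2 = 1/2"
  shows "(\<alpha>\<^sup>2 + \<delta>\<^sup>2 - 1/2)\<^sup>2 \<le> 1/2 - (\<alpha> * \<beta> + \<gamma> * \<delta>)"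
proof -
  define p where "p = \<alpha>\<^sup>2 + \<delta>\<^sup>2"
  define w where "w = \<alpha> * \<beta> + \<gamma> * \<delta>"
  have "w\<^sup>2 + (\<alpha> * \<gamma> - \<beta> * \<delta>)\<^sup>2 = p * (\<beta>\<^sup>2 + \<gamma>\<^sup>2)"
    by (simp add: p_def w_def power2_eq_square algebra_simps)
  also have "\<beta>\<^sup>2 + \<gamma>\<^sup>2 = 1 - p"
    using assms by (simp add: p_def)
  finally have "w\<^sup>2 + (\<alpha> * \<gamma> - \<beta> * \<delta>)\<^sup>2 = p * (1 - p)" .
  moreover have "(p - 1/2)\<^sup>2 = 1/4 - p * (1 - p)" and "(w - 1/2)\<^sup>2 = w\<^sup>2 - w + 1/4"
    by (simp_all add: power2_eq_square algebra_simps)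
  moreover have "0 \<le> (\<alpha> * \<gamma> - \<beta> * \<delta>)\<^sup>2" and "0 \<le> (w - 1/2)\<^sup>2"
    by simp_all
  ultimately show ?thesis
    unfolding p_def[symmetric] w_def[symmetric] by linarith
qed

lemma le_half_plus_sqrt:
  fixes s g w p :: real
  assumes "0 < s" "g \<le> 2 * s * w" "(p - 1/2)\<^sup>2 \<le> 1/2 - w"
  shows "p \<le> 1/2 + sqrt ((s - g) / (2 * s))"
proof -
  have "1/2 - w \<le> (s - g) / (2 * s)"
    using assms(1,2) by (simp add: field_simps)
  with assms(3) have "p - 1/2 \<le> sqrt ((s - g) / (2 * s))"
    by (intro real_le_rsqrt) linarith
  then show ?thesis by simp
qed

lemma p_succ_le_Delta:
  assumes valid: "valid_alg n T U init" and adv: "adversary_matrix n f \<Gamma>"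
    and D: "\<forall>x\<in>inputs n. D x = (cmod (a x))\<^sup>2" and eig: "principal_eigvec n \<Gamma> a"
    and pos: "0 < spec_norm (inputs n) \<Gamma>"
  shows "p_succ n f D T U init \<le> 1/2 + sqrt (Delta n \<Gamma> U init a T / (2 * spec_norm (inputs n) \<Gamma>))"
proof -
  let ?s = "spec_norm (inputs n) \<Gamma>"
  let ?N = "\<lambda>b p. sq_norm (inputs n) (\<lambda>x. fiber_part f b a x * alg_state n U init x T p)"
  let ?\<Sigma> = "\<lambda>b c. \<Sum>i<n. ?N b (i, c)"
  define \<alpha> where "\<alpha> = sqrt (?\<Sigma> False False)"
  define \<beta> where "\<beta> = sqrt (?\<Sigma> True False)"
  define \<gamma> where "\<gamma> = sqrt (?\<Sigma> False True)"
  define \<delta> where "\<delta> = sqrt (?\<Sigma> True True)"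
  have nonneg: "0 \<le> ?\<Sigma> b c" for b c
    by (simp add: sum_nonneg sq_norm_nonneg)
  have mass: "?\<Sigma> b False + ?\<Sigma> b True = 1/2" for b
  proof -
    have "?\<Sigma> b False + ?\<Sigma> b True
        = (\<Sum>x\<in>inputs n. (cmod (fiber_part f b a x))\<^sup>2 * sq_norm (alg_idx n) (alg_state n U init x T))"
      by (simp add: sum_sq_norm_weighted[symmetric] sum_alg_idx sum.distrib)
    also have "\<dots> = sq_norm (inputs n) (fiber_part f b a)"
      using sq_norm_alg_state[OF valid order.refl] by (simp add: sq_norm_def[of "inputs n"])
    finally show ?thesis using principal_eigvec_fiber_half[OF adv eig] pos by simp
  qed
  have "cmod (progress (alg_idx n) (inputs n) \<Gamma> a (\<lambda>x. alg_state n U init x T))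
      \<le> 2 * ?s * (\<Sum>i<n. sqrt (?N False (i, False)) * sqrt (?N True (i, False))
                        + sqrt (?N False (i, True)) * sqrt (?N True (i, True)))"
    using progress_le_fiber_overlap[OF adv, of "alg_idx n" a "\<lambda>x. alg_state n U init x T"]
    unfolding sum_alg_idx .
  also have "\<dots> \<le> 2 * ?s * (\<alpha> * \<beta> + \<gamma> * \<delta>)"
    unfolding sum.distrib \<alpha>_def \<beta>_def \<gamma>_def \<delta>_def using pos
    by (intro mult_left_mono add_mono sum_sqrt_mult_le sq_norm_nonneg) simp
  finally have progress_le: "cmod (progress (alg_idx n) (inputs n) \<Gamma> a (\<lambda>x. alg_state n U init x T))
      \<le> 2 * ?s * (\<alpha> * \<beta> + \<gamma> * \<delta>)" .
  have "\<alpha>\<^sup>2 + \<gamma>\<^sup>2 = 1/2" "\<beta>\<^sup>2 + \<delta>\<^sup>2 = 1/2"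
    using mass nonneg by (simp_all add: \<alpha>_def \<beta>_def \<gamma>_def \<delta>_def)
  then have "(\<alpha>\<^sup>2 + \<delta>\<^sup>2 - 1/2)\<^sup>2 \<le> 1/2 - (\<alpha> * \<beta> + \<gamma> * \<delta>)"
    by (rule fidelity_inequality)
  moreover have "p_succ n f D T U init = \<alpha>\<^sup>2 + \<delta>\<^sup>2"
    using p_succ_eq_fiber_masses[OF D] nonneg by (simp add: \<alpha>_def \<delta>_def sum.distrib)
  moreover have "Delta n \<Gamma> U init a T
      = ?s - cmod (progress (alg_idx n) (inputs n) \<Gamma> a (\<lambda>x. alg_state n U init x T))"
    by (simp add: Delta_def joint_inner_id_tensor_eq_progress)
  ultimately show ?thesis
    using le_half_plus_sqrt[OF pos progress_le] by (simp only:)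
qed

lemma query_complexity_attained:
  assumes "query_complexity n f D = enat T"
  obtains U init where "valid_alg n T U init" "2/3 \<le> p_succ n f D T U init"
proof -
  let ?A = "{enat T | T. \<exists>U init. valid_alg n T U init \<and> p_succ n f D T U init \<ge> 2/3}"
  have Inf: "Inf ?A = enat T"
    using assms unfolding query_complexity_def .
  have "?A \<noteq> {}"
  proof
    assume "?A = {}"
    from Inf have "Inf ({} :: enat set) = enat T"
      by (simp only: \<open>?A = {}\<close>)
    then show False by (simp add: top_enat_def)
  qed
  then obtain k where "k \<in> ?A" by blast
  then have "Inf ?A \<in> ?A" by (rule wellorder_InfI)
  with Inf that show ?thesis by auto
qed

lemma query_lower_bound_arith:
  fixes s M \<Delta> p :: real and T :: nat
  assumes "0 < s" "2/3 \<le> p" "p \<le> 1/2 + sqrt (\<Delta> / (2 * s))" "\<Delta> \<le> 2 * M * T"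
  shows "s / (36 * M) \<le> T"
proof -
  have "\<bar>1/6\<bar> \<le> sqrt (\<Delta> / (2 * s))"
    using assms(2,3) by simp
  then have "(1/6)\<^sup>2 \<le> \<Delta> / (2 * s)"
    by (rule sqrt_ge_absD)
  then have "s \<le> 36 * M * T"
    using assms(1,4) by (simp add: power2_eq_square field_simps)
  show ?thesis
  proof (cases "0 < M")
    case True
    with \<open>s \<le> 36 * M * T\<close> show ?thesis by (simp add: divide_le_eq mult.commute)
  next
    case False
    then have "s / (36 * M) \<le> 0"
      using assms(1) by (intro divide_nonneg_nonpos) auto
    then show ?thesis by (meson of_nat_0_le_iff order_trans)
  qed
qed

theorem theorem5p2:
  fixes n :: nat and f :: "bool list \<Rightarrow> bool" and D :: "bool list \<Rightarrow> real"
    and a :: "bool list \<Rightarrow> complex" and \<Gamma> :: "bool list \<Rightarrow> bool list \<Rightarrow> real"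
  assumes a_unit: "(\<Sum>x\<in>inputs n. (cmod (a x))\<^sup>2) = 1"
    and D_def: "\<forall>x\<in>inputs n. D x = (cmod (a x))\<^sup>2"
    and adv: "adversary_matrix n f \<Gamma>"
    and nonzero: "\<exists>x\<in>inputs n. \<exists>y\<in>inputs n. \<Gamma> x y \<noteq> 0"
    and eig: "principal_eigvec n \<Gamma> a"
  shows "(\<forall>T U init. valid_alg n T U init \<longrightarrow>
            Delta n \<Gamma> U init a 0 = 0
          \<and> (\<forall>t<T. Delta n \<Gamma> U init a (Suc t)
                    \<le> Delta n \<Gamma> U init a t
                       + 2 * Max ((\<lambda>i. spec_norm (inputs n) (adv_part \<Gamma> i)) ` {0..<n}))
          \<and> p_succ n f D T U init
              \<le> 1/2 + sqrt (Delta n \<Gamma> U init a T / (2 * spec_norm (inputs n) \<Gamma>)))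
       \<and> (\<forall>T. query_complexity n f D = enat T \<longrightarrow>
            spec_norm (inputs n) \<Gamma>
              / (36 * Max ((\<lambda>i. spec_norm (inputs n) (adv_part \<Gamma> i)) ` {0..<n})) \<le> real T)"
proof -
  let ?s = "spec_norm (inputs n) \<Gamma>"
  let ?M = "Max ((\<lambda>i. spec_norm (inputs n) (adv_part \<Gamma> i)) ` {0..<n})"
  obtain x y where "x \<in> inputs n" "y \<in> inputs n" "\<Gamma> x y \<noteq> 0"
    using nonzero by blast
  then have pos: "0 < ?s" by (rule spec_norm_pos[OF finite_inputs])
  have unit: "sq_norm (inputs n) a = 1"
    using a_unit by (simp add: sq_norm_def)
  have "Delta n \<Gamma> U init a 0 = 0
      \<and> (\<forall>t<T. Delta n \<Gamma> U init a (Suc t) \<le> Delta n \<Gamma> U init a t + 2 * ?M)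
      \<and> p_succ n f D T U init \<le> 1/2 + sqrt (Delta n \<Gamma> U init a T / (2 * ?s))"
    if valid: "valid_alg n T U init" for T U init
    using Delta_0[OF valid eig] Delta_Suc_le[OF valid _ unit] p_succ_le_Delta[OF valid adv D_def eig pos]
    by blast
  moreover have "?s / (36 * ?M) \<le> real T" if Q: "query_complexity n f D = enat T" for T
  proof -
    obtain U init where valid: "valid_alg n T U init" and succ: "2/3 \<le> p_succ n f D T U init"
      using query_complexity_attained[OF Q] .
    have "Delta n \<Gamma> U init a T \<le> 2 * ?M * real T"
      using le_linear_of_bounded_increments[of "Delta n \<Gamma> U init a" T "2 * ?M" T]
        Delta_0[OF valid eig] Delta_Suc_le[OF valid _ unit] by blast
    then show ?thesis
      by (rule query_lower_bound_arith[OF pos succ p_succ_le_Delta[OF valid adv D_def eig pos]])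
  qed
  ultimately show ?thesis by blast
qed

end
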